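(* Let $g_A:B\to A$ be a small surjection in $\mathbf C$ with $\ker g_A=(\tau)$ and $\tau\,\mathfrak m_B=0$. Suppose given objects $(S,\Delta_S,h_S)$ of $\mathscr F$ over $B$ and $(R,\Delta_R,h_R)$ of $\mathscr F$ over $A$, and a morphism between them over $g_A$, i.e. a homomorphism $g_R:S\to R$ compatible with the structure maps, the sections and the maps to $R_0$, such that $S\otimes_B A\cong R$. If the object over $A$ is planar, then so is the object over $B$.
   Context: $\Lambda$ is a complete noetherian local ring with residue field $k$; $\mathbf C$ is the category of Artinian local $\Lambda$-algebras with residue field $k$. Fix $\gamma,\delta\in k$ with $\gamma^{2}-4\delta\neq0$, $q=X^{2}+\gamma XY+\delta Y^{2}$, $R_0=k[[X,Y]]/(q)$, with $u,v$ the classes of $X,Y$ and $\Delta_0:R_0\to k$ the residue map. Fix liftings $\tilde\gamma,\tilde\delta\in\Lambda$ of $\gamma,\delta$; for $A\in\mathbf C$ let $\gamma_A,\delta_A$ be their images in $A$ and $q_A=X^{2}+\gamma_AXY+\delta_AY^{2}$. An object of $\mathscr F$ over $A$ is a commutative cocartesian square of local rings and local homomorphisms: a local $A$-algebra $R$, flat over $A$ and $\mathfrak m_R$-adically complete, a local $A$-algebra section $\Delta:R\to A$, and $h:R\to R_0$ over $A\to k$ inducing $R\otimes_A k\cong R_0$, compatible with $\Delta,\Delta_0$. Such an object is called planar if it is (isomorphic to) the base change of the object $\xi$: $A_{pd}=\Lambda[[S,T]]$, $R_{pd}=A_{pd}[[X,Y]]/(\tilde q(X,Y)-\tilde q(S,T))$,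 $\Delta_{pd}(X)=S,\Delta_{pd}(Y)=T$, along some local homomorphism $A_{pd}\to A$; equivalently, there are $s,t\in\mathfrak m_A$ and an isomorphism $R\cong A[[X,Y]]/(q_A(X,Y)-q_A(s,t))$ under which $\Delta(X)=s$, $\Delta(Y)=t$ and $h$ sends $X,Y$ to $u,v$. *)

theory Defs
  imports "HOL-Computational_Algebra.Formal_Power_Series"
begin

definition rhom :: "('a::comm_ring_1 \<Rightarrow> 'b::comm_ring_1) \<Rightarrow> bool" where
  "rhom f \<longleftrightarrow> f 1 = 1 \<and> (\<forall>x y. f (x + y) = f x + f y) \<and> (\<forall>x y. f (x * y) = f x * f y)"

definition is_ideal :: "'a::comm_ring_1 set \<Rightarrow> bool" where
  "is_ideal I \<longleftrightarrow> 0 \<in> I \<and> (\<forall>x\<in>I. \<forall>y\<in>I. x + y \<in> I) \<and> (\<forall>x\<in>I. \<forall>r. r * x \<in> I)"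

definition ideal_gen :: "'a::comm_ring_1 set \<Rightarrow> 'a set" where
  "ideal_gen S = \<Inter>{I. is_ideal I \<and> S \<subseteq> I}"

definition ideal_prod :: "'a::comm_ring_1 set \<Rightarrow> 'a set \<Rightarrow> 'a set" where
  "ideal_prod I J = ideal_gen {x * y | x y. x \<in> I \<and> y \<in> J}"

primrec ideal_pow :: "'a::comm_ring_1 set \<Rightarrow> nat \<Rightarrow> 'a set" where
  "ideal_pow I 0 = UNIV"
| "ideal_pow I (Suc n) = ideal_prod I (ideal_pow I n)"

text \<open>The set of non-units; in a local ring this is the maximal ideal.\<close>
definition nonunits :: "'a::comm_ring_1 set" where
  "nonunits = {x. \<not> x dvd 1}"

definition kernel :: "('a \<Rightarrow> 'b::zero) \<Rightarrow> 'a set" where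
  "kernel f = {x. f x = 0}"

definition local_ring :: "'a::comm_ring_1 itself \<Rightarrow> bool" where
  "local_ring _ \<longleftrightarrow> (1::'a) \<noteq> 0 \<and> is_ideal (nonunits :: 'a set)"

definition local_hom :: "('a::comm_ring_1 \<Rightarrow> 'b::comm_ring_1) \<Rightarrow> bool" where
  "local_hom f \<longleftrightarrow> (\<forall>x. \<not> x dvd 1 \<longrightarrow> \<not> f x dvd 1)"

text \<open>A surjective ring map to a field whose kernel is the set of non-units:
  the ring is local with this residue map onto its residue field.\<close>
definition residue_map :: "('a::comm_ring_1 \<Rightarrow> 'k::field) \<Rightarrow> bool" where
  "residue_map r \<longleftrightarrow> rhom r \<and> surj r \<and> kernel r = nonunits"

definition noetherian_ring :: "'a::comm_ring_1 itself \<Rightarrow> bool" where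
  "noetherian_ring _ \<longleftrightarrow> (\<forall>C :: nat \<Rightarrow> 'a set. (\<forall>n. is_ideal (C n) \<and> C n \<subseteq> C (Suc n))
       \<longrightarrow> (\<exists>N. \<forall>n\<ge>N. C n = C N))"

definition artinian_ring :: "'a::comm_ring_1 itself \<Rightarrow> bool" where
  "artinian_ring _ \<longleftrightarrow> (\<forall>C :: nat \<Rightarrow> 'a set. (\<forall>n. is_ideal (C n) \<and> C (Suc n) \<subseteq> C n)
       \<longrightarrow> (\<exists>N. \<forall>n\<ge>N. C n = C N))"

definition adic_complete :: "'a::comm_ring_1 set \<Rightarrow> bool" where
  "adic_complete I \<longleftrightarrow> (\<Inter>n. ideal_pow I n) = {0} \<and>
     (\<forall>x :: nat \<Rightarrow> 'a. (\<forall>n. x (Suc n) - x n \<in> ideal_pow I n) \<longrightarrow>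
        (\<exists>l. \<forall>n. l - x n \<in> ideal_pow I n))"

text \<open>Flatness of an algebra \<open>\<iota> : A \<rightarrow> R\<close>, via the equational criterion.\<close>
definition flat_alg :: "('a::comm_ring_1 \<Rightarrow> 'r::comm_ring_1) \<Rightarrow> bool" where
  "flat_alg \<iota> \<longleftrightarrow> (\<forall>n (a :: nat \<Rightarrow> 'a) (x :: nat \<Rightarrow> 'r). (\<Sum>i<n. \<iota> (a i) * x i) = 0 \<longrightarrow>
     (\<exists>m (c :: nat \<Rightarrow> nat \<Rightarrow> 'a) (y :: nat \<Rightarrow> 'r).
        (\<forall>i<n. x i = (\<Sum>j<m. \<iota> (c i j) * y j)) \<and> (\<forall>j<m. (\<Sum>i<n. a i * c i j) = 0)))"

section \<open>Two-variable power series  A[[X,Y]] = (A[[X]])[[Y]]\<close>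

definition C2 :: "'a::comm_ring_1 \<Rightarrow> 'a fps fps" where
  "C2 c = fps_const (fps_const c)"

definition X2 :: "'a::comm_ring_1 fps fps" where
  "X2 = fps_const fps_X"

definition Y2 :: "'a::comm_ring_1 fps fps" where
  "Y2 = fps_X"

definition qform :: "'a::comm_ring_1 \<Rightarrow> 'a \<Rightarrow> 'a \<Rightarrow> 'a \<Rightarrow> 'a" where
  "qform g d x y = x^2 + g * x * y + d * y^2"

definition base_ring :: "('l::comm_ring_1 \<Rightarrow> 'k::field) \<Rightarrow> bool" where
  "base_ring resL \<longleftrightarrow> residue_map resL \<and> noetherian_ring TYPE('l) \<and> adic_complete (nonunits :: 'l set)"

definition C_obj :: "('l::comm_ring_1 \<Rightarrow> 'k::field) \<Rightarrow> ('l \<Rightarrow> 'a::comm_ring_1) \<Rightarrow> ('a \<Rightarrow> 'k) \<Rightarrow> bool" where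
  "C_obj resL lam res \<longleftrightarrow> rhom lam \<and> local_hom lam \<and> residue_map res \<and> artinian_ring TYPE('a)
     \<and> res \<circ> lam = resL"

text \<open>Data of R_0 = k[[X,Y]]/(q): quotient map pi0 and residue map Delta0.\<close>
definition R0_data :: "'k::field \<Rightarrow> 'k \<Rightarrow> ('k fps fps \<Rightarrow> 'z::comm_ring_1) \<Rightarrow> ('z \<Rightarrow> 'k) \<Rightarrow> bool" where
  "R0_data g d pi0 D0 \<longleftrightarrow> g^2 - 4 * d \<noteq> 0 \<and> rhom pi0 \<and> surj pi0 \<and>
     kernel pi0 = ideal_gen {qform (C2 g) (C2 d) X2 Y2} \<and> rhom D0 \<and>
     D0 \<circ> pi0 = (\<lambda>f. fps_nth (fps_nth f 0) 0)"

text \<open>Object (R, Delta, h) of F over A (A with residue map res; R an A-algebra via iota).\<close>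
definition F_obj :: "('k fps fps \<Rightarrow> 'z::comm_ring_1) \<Rightarrow> ('z \<Rightarrow> 'k::field) \<Rightarrow> ('a::comm_ring_1 \<Rightarrow> 'k)
    \<Rightarrow> ('a \<Rightarrow> 'r::comm_ring_1) \<Rightarrow> ('r \<Rightarrow> 'a) \<Rightarrow> ('r \<Rightarrow> 'z) \<Rightarrow> bool" where
  "F_obj pi0 D0 res \<iota> D h \<longleftrightarrow>
     rhom \<iota> \<and> local_ring TYPE('r) \<and> local_hom \<iota> \<and> flat_alg \<iota> \<and> adic_complete (nonunits :: 'r set) \<and>
     rhom D \<and> local_hom D \<and> D \<circ> \<iota> = id \<and>
     rhom h \<and> local_hom h \<and> h \<circ> \<iota> = pi0 \<circ> C2 \<circ> res \<and>
     surj h \<and> kernel h = ideal_gen (\<iota> ` (nonunits :: 'a set)) \<and>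
     res \<circ> D = D0 \<circ> h"

text \<open>Planarity of an object over A, A a \<Lambda>-algebra via lam; gt, dt the fixed lifts.\<close>
definition planar :: "('k::field fps fps \<Rightarrow> 'z::comm_ring_1) \<Rightarrow> ('l::comm_ring_1 \<Rightarrow> 'a::comm_ring_1) \<Rightarrow> 'l \<Rightarrow> 'l
    \<Rightarrow> ('a \<Rightarrow> 'r::comm_ring_1) \<Rightarrow> ('r \<Rightarrow> 'a) \<Rightarrow> ('r \<Rightarrow> 'z) \<Rightarrow> bool" where
  "planar pi0 lam gt dt \<iota> D h \<longleftrightarrow>
     (\<exists>s t (\<phi> :: 'a fps fps \<Rightarrow> 'r). s \<in> nonunits \<and> t \<in> nonunits \<and>
        rhom \<phi> \<and> surj \<phi> \<and>
        kernel \<phi> = ideal_gen {qform (C2 (lam gt)) (C2 (lam dt)) X2 Y2 - C2 (qform (lam gt) (lam dt) s t)} \<and>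
        \<phi> \<circ> C2 = \<iota> \<and> D (\<phi> X2) = s \<and> D (\<phi> Y2) = t \<and>
        h (\<phi> X2) = pi0 X2 \<and> h (\<phi> Y2) = pi0 Y2)"

end

theory Submission
  imports Defs
begin

unbundle fps_syntax

text \<open>Write \<open>R = A[[X,Y]]/(q(X,Y) - q(s\<^sub>A,t\<^sub>A))\<close> and let \<open>T\<close> be the image of \<open>\<tau>\<close> in \<open>S\<close>.
  Then \<open>T\<^sup>2 = 0\<close>, \<open>S \<rightarrow> R\<close> has kernel \<open>T S\<close>, and by flatness the annihilator of \<open>T\<close> in \<open>S\<close> is
  \<open>\<mm>\<^sub>B S\<close>. Lift the images of \<open>X, Y\<close> in \<open>R\<close> to \<open>x\<^sub>0, y\<^sub>0 \<in> S\<close>. The defect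
  \<open>q(x\<^sub>0,y\<^sub>0) - q(\<Delta>x\<^sub>0,\<Delta>y\<^sub>0)\<close> dies in \<open>R\<close>, so it is \<open>w T\<close>, and applying \<open>\<Delta>\<close> shows that \<open>w\<close> reduces into
  the maximal ideal of \<open>R\<^sub>0\<close>. Since \<open>\<gamma>\<^sup>2 - 4\<delta>\<close> is a unit, that ideal is generated by the partial
  derivatives of \<open>q\<close>, so moving \<open>x\<^sub>0, y\<^sub>0\<close> by multiples of \<open>T\<close> removes the defect. The resulting map
  \<open>B[[X,Y]] \<rightarrow> S\<close> is onto because it is onto modulo the square-zero ideal \<open>T S\<close>, and comparison with
  \<open>R\<close> shows that its kernel is generated by \<open>q(X,Y) - q(\<Delta>x,\<Delta>y)\<close>.\<close>

section \<open>Ring homomorphisms and ideals\<close>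

lemma rhomD:
  assumes "rhom f"
  shows "f 1 = 1" "f (x + y) = f x + f y" "f (x * y) = f x * f y"
  using assms unfolding rhom_def by auto

lemma rhom_0: assumes "rhom f" shows "f 0 = 0"
proof -
  have "f 0 + f 0 = f 0 + 0" using rhomD(2)[OF assms, of 0 0] by simp
  then show ?thesis by (rule add_left_imp_eq)
qed

lemma rhom_uminus: assumes "rhom f" shows "f (- x) = - f x"
proof -
  have "f x + f (- x) = 0" using rhomD(2)[OF assms, of x "- x"] rhom_0[OF assms] by simp
  then show ?thesis by (metis add.commute minus_unique)
qed

lemma rhom_diff: assumes "rhom f" shows "f (x - y) = f x - f y"
  using rhomD(2)[OF assms, of x "- y"] rhom_uminus[OF assms, of y] by simp

lemma rhom_power: assumes "rhom f" shows "f (x ^ n) = f x ^ n"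
  by (induction n) (simp_all add: rhomD[OF assms])

lemma rhom_sum: assumes "rhom f" shows "f (sum g S) = (\<Sum>i\<in>S. f (g i))"
  by (induction S rule: infinite_finite_induct) (simp_all add: rhom_0[OF assms] rhomD[OF assms])

lemma rhom_numeral: assumes "rhom f" shows "f (numeral n) = numeral n"
proof -
  have "f (of_nat m) = of_nat m" for m
    by (induction m) (simp_all add: rhom_0[OF assms] rhomD[OF assms])
  from this[of "numeral n"] show ?thesis by simp
qed

lemma rhom_comp: "rhom f \<Longrightarrow> rhom g \<Longrightarrow> rhom (f \<circ> g)"
  unfolding rhom_def by simp

lemma rhom_fps_const: "rhom (fps_const :: 'a::comm_ring_1 \<Rightarrow> 'a fps)"
  unfolding rhom_def by (simp add: fps_const_add fps_const_mult)

lemma rhom_C2: "rhom (C2 :: 'a::comm_ring_1 \<Rightarrow> 'a fps fps)"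
  unfolding rhom_def C2_def by (simp add: fps_const_add fps_const_mult)

lemma C2_0 [simp]: "C2 0 = 0"
  unfolding C2_def by simp

lemma C2_mult_nth [simp]: "(C2 c * F) $ j $ i = c * F $ j $ i"
  unfolding C2_def by simp

lemma nonunitsI: "\<not> x dvd 1 \<Longrightarrow> x \<in> nonunits"
  unfolding nonunits_def by simp

lemma nonunitsD: "x \<in> nonunits \<Longrightarrow> \<not> x dvd 1"
  unfolding nonunits_def by simp

lemma rhom_nonunits_preimage:
  assumes "rhom f" "f x \<in> nonunits"
  shows "x \<in> nonunits"
proof (rule nonunitsI, rule notI)
  assume "x dvd 1"
  then obtain y where "1 = x * y" by (auto simp: dvd_def)
  then have "1 = f x * f y" by (metis rhomD(1,3)[OF assms(1)])
  then show False using nonunitsD[OF assms(2)] by (metis dvdI)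
qed

lemma local_hom_nonunits: "local_hom f \<Longrightarrow> x \<in> nonunits \<Longrightarrow> f x \<in> nonunits"
  unfolding local_hom_def nonunits_def by simp

lemma nonunits_of_annihilates:
  fixes a :: "'a::comm_ring_1"
  assumes "a \<noteq> 0" "a * c = 0"
  shows "c \<in> nonunits"
proof (rule nonunitsI, rule notI)
  assume "c dvd 1"
  then obtain u where "1 = c * u" by (auto simp: dvd_def)
  then have "a = (a * c) * u" by (simp add: mult.assoc)
  then show False using assms by simp
qed

lemma is_idealD:
  assumes "is_ideal I"
  shows "0 \<in> I" "x \<in> I \<Longrightarrow> y \<in> I \<Longrightarrow> x + y \<in> I" "x \<in> I \<Longrightarrow> r * x \<in> I"
  using assms unfolding is_ideal_def by auto

lemma ideal_mult_right: "is_ideal I \<Longrightarrow> x \<in> I \<Longrightarrow> x * r \<in> I"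
  using is_idealD(3)[of I x r] by (simp add: mult.commute)

lemma ideal_diff: "is_ideal I \<Longrightarrow> x \<in> I \<Longrightarrow> y \<in> I \<Longrightarrow> x - y \<in> I"
  using is_idealD(2)[of I x "- y"] is_idealD(3)[of I y "- 1"] by simp

lemma ideal_sum: "is_ideal I \<Longrightarrow> (\<And>i. i \<in> S \<Longrightarrow> g i \<in> I) \<Longrightarrow> sum g S \<in> I"
  by (induction S rule: infinite_finite_induct) (auto intro: is_idealD)

lemma is_ideal_kernel: "rhom f \<Longrightarrow> is_ideal (kernel f)"
  unfolding is_ideal_def kernel_def by (simp add: rhom_0 rhomD)

lemma is_ideal_image:
  assumes "rhom f" "surj f" "is_ideal J"
  shows "is_ideal (f ` J)"
  unfolding is_ideal_def
proof (intro conjI ballI allI)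
  show "0 \<in> f ` J" using rhom_0[OF assms(1)] is_idealD(1)[OF assms(3)] by (metis image_eqI)
  fix x y assume "x \<in> f ` J" "y \<in> f ` J"
  then obtain a b where "a \<in> J" "b \<in> J" "x = f a" "y = f b" by blast
  then show "x + y \<in> f ` J"
    using rhomD(2)[OF assms(1), of a b] is_idealD(2)[OF assms(3)] by (metis image_eqI)
next
  fix x r assume "x \<in> f ` J"
  then obtain a where "a \<in> J" "x = f a" by blast
  moreover obtain b where "r = f b" using assms(2) by (metis surjD)
  ultimately show "r * x \<in> f ` J"
    using rhomD(3)[OF assms(1), of b a] is_idealD(3)[OF assms(3)] by (metis image_eqI)
qed

lemma is_ideal_ideal_gen: "is_ideal (ideal_gen S)"
  unfolding is_ideal_def ideal_gen_def by auto

lemma ideal_gen_superset: "S \<subseteq> ideal_gen S"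
  unfolding ideal_gen_def by auto

lemma ideal_gen_minimal: "is_ideal I \<Longrightarrow> S \<subseteq> I \<Longrightarrow> ideal_gen S \<subseteq> I"
  unfolding ideal_gen_def by auto

lemma ideal_gen_mono: "S \<subseteq> S' \<Longrightarrow> ideal_gen S \<subseteq> ideal_gen S'"
  unfolding ideal_gen_def by auto

lemma ideal_gen_singleton: "ideal_gen {a} = {r * a | r. True}"
proof
  have "is_ideal {r * a | r. True}"
    unfolding is_ideal_def
  proof (intro conjI ballI allI)
    show "0 \<in> {r * a | r. True}" by (auto intro: exI[of _ 0])
    fix x y assume "x \<in> {r * a | r. True}" "y \<in> {r * a | r. True}"
    then obtain r1 r2 where "x = r1 * a" "y = r2 * a" by auto
    then show "x + y \<in> {r * a | r. True}" by (auto intro: exI[of _ "r1 + r2"] simp: distrib_right)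
  next
    fix x r assume "x \<in> {r * a | r. True}"
    then obtain r1 where "x = r1 * a" by auto
    then show "r * x \<in> {r * a | r. True}" by (auto intro: exI[of _ "r * r1"] simp: mult.assoc)
  qed
  moreover have "{a} \<subseteq> {r * a | r. True}" by (auto intro: exI[of _ 1])
  ultimately show "ideal_gen {a} \<subseteq> {r * a | r. True}" by (rule ideal_gen_minimal)
  show "{r * a | r. True} \<subseteq> ideal_gen {a}"
    using is_idealD(3)[OF is_ideal_ideal_gen] ideal_gen_superset[of "{a}"] by blast
qed

lemma annihilates_ideal_gen_image:
  assumes "rhom \<iota>" "\<forall>m\<in>M. a * m = 0" "z \<in> ideal_gen (\<iota> ` M)"
  shows "\<iota> a * z = 0"
proof -
  have "is_ideal {z. \<iota> a * z = 0}"
    unfolding is_ideal_def by (simp add: distrib_left mult.left_commute)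
  moreover have "\<iota> ` M \<subseteq> {z. \<iota> a * z = 0}"
    using assms(2) by (auto simp: rhomD(3)[OF assms(1), symmetric] rhom_0[OF assms(1)])
  ultimately show ?thesis using ideal_gen_minimal assms(3) by blast
qed

lemma flat_alg_annihilator:
  assumes "flat_alg \<iota>" "rhom \<iota>" "\<iota> a * z = 0"
  shows "z \<in> ideal_gen (\<iota> ` {c. a * c = 0})"
proof -
  have "(\<Sum>i<1. \<iota> ((\<lambda>_. a) i) * (\<lambda>_. z) i) = 0" using assms(3) by simp
  from assms(1)[unfolded flat_alg_def, rule_format, where n = 1 and a = "\<lambda>_. a" and x = "\<lambda>_. z",
      OF this]
  obtain m and c :: "nat \<Rightarrow> nat \<Rightarrow> 'a" and y where
    z: "z = (\<Sum>j<m. \<iota> (c 0 j) * y j)" and c: "\<forall>j<m. a * c 0 j = 0" by auto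
  show ?thesis
    unfolding z
  proof (rule ideal_sum[OF is_ideal_ideal_gen])
    fix j assume "j \<in> {..<m}"
    then have "\<iota> (c 0 j) \<in> \<iota> ` {c. a * c = 0}" using c by simp
    then have "\<iota> (c 0 j) \<in> ideal_gen (\<iota> ` {c. a * c = 0})"
      using ideal_gen_superset by (rule subsetD[rotated])
    then show "\<iota> (c 0 j) * y j \<in> ideal_gen (\<iota> ` {c. a * c = 0})"
      by (rule ideal_mult_right[OF is_ideal_ideal_gen])
  qed
qed

section \<open>Substitution into adically complete rings\<close>

lemma is_ideal_pow: "is_ideal (ideal_pow I n)"
proof (cases n)
  case 0 then show ?thesis by (simp add: is_ideal_def)
next
  case (Suc m) then show ?thesis by (simp only: ideal_pow.simps ideal_prod_def is_ideal_ideal_gen)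
qed

lemma ideal_prod_mem: "x \<in> I \<Longrightarrow> y \<in> J \<Longrightarrow> x * y \<in> ideal_prod I J"
  unfolding ideal_prod_def by (rule subsetD[OF ideal_gen_superset]) blast

lemma ideal_pow_antimono: "m \<le> n \<Longrightarrow> ideal_pow I n \<subseteq> ideal_pow I m"
proof (induction n rule: dec_induct)
  case (step k)
  have "ideal_pow I (Suc k) \<subseteq> ideal_pow I k"
    unfolding ideal_pow.simps ideal_prod_def
    by (rule ideal_gen_minimal[OF is_ideal_pow]) (auto intro: is_idealD(3)[OF is_ideal_pow])
  with step show ?case by blast
qed simp

lemma power_in_ideal_pow: "x \<in> I \<Longrightarrow> x ^ n * r \<in> ideal_pow I n"
proof (induction n arbitrary: r)
  case (Suc n)
  have "x * (x ^ n * r) \<in> ideal_pow I (Suc n)"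
    using ideal_prod_mem[OF Suc.prems Suc.IH[OF Suc.prems]] by simp
  then show ?case by (simp add: mult.assoc)
qed simp

lemma power_in_ideal_pow_le: "x \<in> I \<Longrightarrow> m \<le> n \<Longrightarrow> x ^ n * r \<in> ideal_pow I m"
  using power_in_ideal_pow ideal_pow_antimono by blast

lemma adic_complete_separated:
  assumes "adic_complete I" "\<And>N. z \<in> ideal_pow I N"
  shows "z = 0"
  using assms unfolding adic_complete_def by blast

definition fps_partial_eval :: "('a::comm_ring_1 \<Rightarrow> 's::comm_ring_1) \<Rightarrow> 's \<Rightarrow> 'a fps \<Rightarrow> nat \<Rightarrow> 's" where
  "fps_partial_eval \<psi> y f N = (\<Sum>n<N. \<psi> (f $ n) * y ^ n)"

definition fps_adic_eval_to :: "'s::comm_ring_1 set \<Rightarrow> ('a::comm_ring_1 \<Rightarrow> 's) \<Rightarrow> 's \<Rightarrow> 'a fps \<Rightarrow> 's \<Rightarrow> bool" where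
  "fps_adic_eval_to I \<psi> y f l \<longleftrightarrow> (\<forall>N. l - fps_partial_eval \<psi> y f N \<in> ideal_pow I N)"

definition fps_adic_eval :: "'s::comm_ring_1 set \<Rightarrow> ('a::comm_ring_1 \<Rightarrow> 's) \<Rightarrow> 's \<Rightarrow> 'a fps \<Rightarrow> 's" where
  "fps_adic_eval I \<psi> y f = (SOME l. fps_adic_eval_to I \<psi> y f l)"

lemma fps_adic_eval_to_unique:
  assumes "adic_complete I" "fps_adic_eval_to I \<psi> y f l" "fps_adic_eval_to I \<psi> y f l'"
  shows "l = l'"
proof -
  have "l - l' = 0"
  proof (rule adic_complete_separated[OF assms(1)])
    fix N
    have "(l - fps_partial_eval \<psi> y f N) - (l' - fps_partial_eval \<psi> y f N) \<in> ideal_pow I N"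
      using assms(2,3) unfolding fps_adic_eval_to_def by (blast intro: ideal_diff is_ideal_pow)
    then show "l - l' \<in> ideal_pow I N" by simp
  qed
  then show ?thesis by simp
qed

lemma fps_adic_eval_to_exists:
  assumes "adic_complete I" "y \<in> I"
  shows "\<exists>l. fps_adic_eval_to I \<psi> y f l"
proof -
  have "\<forall>n. fps_partial_eval \<psi> y f (Suc n) - fps_partial_eval \<psi> y f n \<in> ideal_pow I n"
    by (simp add: fps_partial_eval_def mult.commute power_in_ideal_pow[OF assms(2)])
  then show ?thesis
    using assms(1) unfolding adic_complete_def fps_adic_eval_to_def by blast
qed

lemma fps_adic_eval:
  assumes "adic_complete I" "y \<in> I"
  shows "fps_adic_eval_to I \<psi> y f (fps_adic_eval I \<psi> y f)"
  unfolding fps_adic_eval_def using fps_adic_eval_to_exists[OF assms] by (rule someI_ex)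

lemma fps_adic_eval_eqI:
  assumes "adic_complete I" "y \<in> I" "fps_adic_eval_to I \<psi> y f l"
  shows "fps_adic_eval I \<psi> y f = l"
  using fps_adic_eval_to_unique[OF assms(1) fps_adic_eval[OF assms(1,2)] assms(3)] .

lemma fps_partial_eval_add:
  assumes "rhom \<psi>"
  shows "fps_partial_eval \<psi> y (f + g) N = fps_partial_eval \<psi> y f N + fps_partial_eval \<psi> y g N"
  unfolding fps_partial_eval_def by (simp add: rhomD[OF assms] distrib_right sum.distrib)

lemma fps_partial_eval_const:
  assumes "rhom \<psi>"
  shows "fps_partial_eval \<psi> y (fps_const r) N = (if N = 0 then 0 else \<psi> r)"
proof (cases N)
  case (Suc M)
  then show ?thesis
    unfolding fps_partial_eval_def Suc sum.lessThan_Suc_shift by (simp add: rhom_0[OF assms])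
qed (simp add: fps_partial_eval_def)

lemma fps_partial_eval_X:
  assumes "rhom \<psi>"
  shows "fps_partial_eval \<psi> y fps_X N = (if N \<le> 1 then 0 else y)"
proof -
  have "fps_partial_eval \<psi> y fps_X N = (\<Sum>n<N. if n = 1 then y else 0)"
    unfolding fps_partial_eval_def
    by (rule sum.cong) (simp_all add: fps_X_nth rhom_0[OF assms] rhomD(1)[OF assms])
  then show ?thesis by (simp add: sum.delta)
qed

lemma fps_partial_eval_mult:
  assumes "rhom \<psi>" "y \<in> I"
  shows "fps_partial_eval \<psi> y f N * fps_partial_eval \<psi> y g N - fps_partial_eval \<psi> y (f * g) N
           \<in> ideal_pow I N"
proof -
  define c where "c = (\<lambda>i j. \<psi> (f $ i) * y ^ i * (\<psi> (g $ j) * y ^ j))"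
  define Tri where "Tri = {(i, j). i + j < N}"
  define Sq where "Sq = {..<N} \<times> {..<N}"
  have "fps_partial_eval \<psi> y (f * g) N = (\<Sum>n<N. \<Sum>i\<le>n. c i (n - i))"
  proof (unfold fps_partial_eval_def, rule sum.cong[OF refl])
    fix n
    have "\<psi> ((f * g) $ n) * y ^ n = (\<Sum>i\<le>n. \<psi> (f $ i) * \<psi> (g $ (n - i)) * y ^ n)"
      by (simp add: fps_mult_nth rhom_sum[OF assms(1)] rhomD(3)[OF assms(1)] atLeast0AtMost
          sum_distrib_right)
    also have "\<dots> = (\<Sum>i\<le>n. c i (n - i))"
    proof (rule sum.cong[OF refl])
      fix i assume "i \<in> {..n}"
      then have "y ^ n = y ^ i * y ^ (n - i)" by (simp add: power_add[symmetric])
      then show "\<psi> (f $ i) * \<psi> (g $ (n - i)) * y ^ n = c i (n - i)"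
        unfolding c_def by (simp add: ac_simps)
    qed
    finally show "\<psi> ((f * g) $ n) * y ^ n = (\<Sum>i\<le>n. c i (n - i))" .
  qed
  also have "\<dots> = (\<Sum>(i, j)\<in>Tri. c i j)"
    unfolding Tri_def by (rule sum.triangle_reindex[symmetric])
  finally have prod: "fps_partial_eval \<psi> y (f * g) N = (\<Sum>(i, j)\<in>Tri. c i j)" .
  have "fps_partial_eval \<psi> y f N * fps_partial_eval \<psi> y g N = (\<Sum>(i, j)\<in>Sq. c i j)"
    unfolding fps_partial_eval_def Sq_def c_def by (simp add: sum_product sum.cartesian_product)
  also have "\<dots> = (\<Sum>(i, j)\<in>Sq - Tri. c i j) + (\<Sum>(i, j)\<in>Tri. c i j)"
    by (rule sum.subset_diff) (auto simp: Tri_def Sq_def)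
  finally have "fps_partial_eval \<psi> y f N * fps_partial_eval \<psi> y g N - fps_partial_eval \<psi> y (f * g) N
      = (\<Sum>(i, j)\<in>Sq - Tri. c i j)"
    using prod by simp
  also have "\<dots> \<in> ideal_pow I N"
  proof (rule ideal_sum[OF is_ideal_pow])
    fix p assume "p \<in> Sq - Tri"
    then obtain i j where p: "p = (i, j)" "N \<le> i + j"
      unfolding Tri_def by (cases p) (auto simp: not_less)
    have "y ^ (i + j) * (\<psi> (f $ i) * \<psi> (g $ j)) \<in> ideal_pow I N"
      by (rule power_in_ideal_pow_le[OF assms(2) p(2)])
    then show "(case p of (i, j) \<Rightarrow> c i j) \<in> ideal_pow I N"
      unfolding p c_def by (simp add: power_add ac_simps)
  qed
  finally show ?thesis .
qed

lemma fps_adic_eval_hom: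
  assumes "rhom \<psi>" "adic_complete I" "y \<in> I"
  shows "rhom (fps_adic_eval I \<psi> y)" "fps_adic_eval I \<psi> y (fps_const r) = \<psi> r"
    "fps_adic_eval I \<psi> y fps_X = y"
proof -
  let ?E = "fps_adic_eval I \<psi> y" and ?P = "fps_partial_eval \<psi> y"
  have conv: "?E f - ?P f N \<in> ideal_pow I N" for f N
    using fps_adic_eval[OF assms(2,3)] unfolding fps_adic_eval_to_def by blast
  have const: "?E (fps_const r) = \<psi> r" for r
    by (rule fps_adic_eval_eqI[OF assms(2,3)])
      (simp add: fps_adic_eval_to_def fps_partial_eval_const[OF assms(1)] is_idealD(1)[OF is_ideal_pow])
  then show "?E (fps_const r) = \<psi> r" .
  have "y - ?P fps_X N \<in> ideal_pow I N" for N
    using power_in_ideal_pow_le[OF assms(3), of N 1 1]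
    by (simp add: fps_partial_eval_X[OF assms(1)] is_idealD(1)[OF is_ideal_pow])
  then show "?E fps_X = y"
    by (intro fps_adic_eval_eqI[OF assms(2,3)]) (simp add: fps_adic_eval_to_def)
  have add: "?E (f + g) = ?E f + ?E g" for f g
  proof (rule fps_adic_eval_eqI[OF assms(2,3)], unfold fps_adic_eval_to_def, intro allI)
    fix N
    have "(?E f - ?P f N) + (?E g - ?P g N) \<in> ideal_pow I N"
      by (rule is_idealD(2)[OF is_ideal_pow conv conv])
    then show "?E f + ?E g - ?P (f + g) N \<in> ideal_pow I N"
      by (simp add: fps_partial_eval_add[OF assms(1)] algebra_simps)
  qed
  have mult: "?E (f * g) = ?E f * ?E g" for f g
  proof (rule fps_adic_eval_eqI[OF assms(2,3)], unfold fps_adic_eval_to_def, intro allI)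
    fix N
    have "(?E f - ?P f N) * ?E g + ?P f N * (?E g - ?P g N) + (?P f N * ?P g N - ?P (f * g) N)
          \<in> ideal_pow I N"
      by (intro is_idealD(2)[OF is_ideal_pow] ideal_mult_right[OF is_ideal_pow]
          is_idealD(3)[OF is_ideal_pow] conv fps_partial_eval_mult[OF assms(1,3)])
    then show "?E f * ?E g - ?P (f * g) N \<in> ideal_pow I N"
      by (simp add: algebra_simps)
  qed
  show "rhom ?E"
    unfolding rhom_def using add mult const[of 1] by (simp add: rhomD(1)[OF assms(1)])
qed

lemma fps_cutoff_eq_sum: "fps_cutoff N f = (\<Sum>i<N. fps_const (f $ i) * fps_X ^ i)"
proof (rule fps_ext)
  fix n
  have "(\<Sum>i<N. fps_const (f $ i) * fps_X ^ i) $ n = (\<Sum>i<N. if n = i then f $ i else 0)"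
    unfolding fps_sum_nth by (rule sum.cong) auto
  then show "fps_cutoff N f $ n = (\<Sum>i<N. fps_const (f $ i) * fps_X ^ i) $ n"
    by (simp add: sum.delta)
qed

lemma fps_hom_unique:
  fixes \<Psi>1 \<Psi>2 :: "'a::comm_ring_1 fps \<Rightarrow> 's::comm_ring_1"
  assumes "rhom \<Psi>1" "rhom \<Psi>2" "\<And>r. \<Psi>1 (fps_const r) = \<Psi>2 (fps_const r)"
    "\<Psi>1 fps_X = \<Psi>2 fps_X" "\<Psi>1 fps_X \<in> I" "adic_complete I"
  shows "\<Psi>1 = \<Psi>2"
proof
  fix f
  let ?y = "\<Psi>1 fps_X"
  have "\<Psi>1 f - \<Psi>2 f = 0"
  proof (rule adic_complete_separated[OF assms(6)])
    fix N
    have split: "f = fps_X ^ N * fps_shift N f + fps_cutoff N f"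
      using fps_shift_cutoff'[of N f] by simp
    have cut: "\<Psi>1 (fps_cutoff N f) = \<Psi>2 (fps_cutoff N f)"
      unfolding fps_cutoff_eq_sum
      by (simp add: rhom_sum[OF assms(1)] rhom_sum[OF assms(2)] rhomD(3)[OF assms(1)]
          rhomD(3)[OF assms(2)] rhom_power[OF assms(1)] rhom_power[OF assms(2)] assms(3,4))
    have "\<Psi>1 f - \<Psi>2 f = ?y ^ N * (\<Psi>1 (fps_shift N f) - \<Psi>2 (fps_shift N f))"
      by (subst (1 2) split)
        (simp add: rhomD(2,3)[OF assms(1)] rhomD(2,3)[OF assms(2)] rhom_power[OF assms(1)]
          rhom_power[OF assms(2)] assms(4) cut algebra_simps)
    then show "\<Psi>1 f - \<Psi>2 f \<in> ideal_pow I N"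
      using power_in_ideal_pow[OF assms(5)] by simp
  qed
  then show "\<Psi>1 f = \<Psi>2 f" by simp
qed

lemma fps2_hom_exists:
  fixes \<psi> :: "'a::comm_ring_1 \<Rightarrow> 's::comm_ring_1"
  assumes "rhom \<psi>" "adic_complete I" "x \<in> I" "y \<in> I"
  obtains \<Phi> :: "'a fps fps \<Rightarrow> 's" where "rhom \<Phi>" "\<And>r. \<Phi> (C2 r) = \<psi> r" "\<Phi> X2 = x" "\<Phi> Y2 = y"
proof -
  let ?\<Psi> = "fps_adic_eval I \<psi> x"
  have \<Psi>: "rhom ?\<Psi>" "\<And>r. ?\<Psi> (fps_const r) = \<psi> r" "?\<Psi> fps_X = x"
    using fps_adic_eval_hom[OF assms(1-3)] by blast+
  let ?\<Phi> = "fps_adic_eval I ?\<Psi> y"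
  have "rhom ?\<Phi>" "\<And>r. ?\<Phi> (fps_const r) = ?\<Psi> r" "?\<Phi> fps_X = y"
    using fps_adic_eval_hom[OF \<Psi>(1) assms(2,4)] by blast+
  with \<Psi> show ?thesis
    by (intro that[of ?\<Phi>]) (simp_all add: C2_def X2_def Y2_def)
qed

lemma fps2_hom_unique:
  fixes \<Phi>1 \<Phi>2 :: "'a::comm_ring_1 fps fps \<Rightarrow> 's::comm_ring_1"
  assumes "rhom \<Phi>1" "rhom \<Phi>2" "\<And>r. \<Phi>1 (C2 r) = \<Phi>2 (C2 r)"
    "\<Phi>1 X2 = \<Phi>2 X2" "\<Phi>1 Y2 = \<Phi>2 Y2" "\<Phi>1 X2 \<in> I" "\<Phi>1 Y2 \<in> I" "adic_complete I"
  shows "\<Phi>1 = \<Phi>2"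
proof -
  have "\<Phi>1 \<circ> fps_const = \<Phi>2 \<circ> fps_const"
    by (rule fps_hom_unique[OF rhom_comp[OF assms(1) rhom_fps_const]
          rhom_comp[OF assms(2) rhom_fps_const], of I])
      (use assms in \<open>simp_all add: C2_def X2_def\<close>)
  then have "\<Phi>1 (fps_const f) = \<Phi>2 (fps_const f)" for f by (metis comp_apply)
  from fps_hom_unique[OF assms(1,2) this, of I] show ?thesis
    using assms by (simp add: Y2_def)
qed

section \<open>Coefficientwise maps of power series\<close>

definition fps_map :: "('a \<Rightarrow> 'b) \<Rightarrow> 'a fps \<Rightarrow> 'b fps" where
  "fps_map g f = Abs_fps (\<lambda>n. g (f $ n))"

lemma fps_map_nth [simp]: "fps_map g f $ n = g (f $ n)"
  unfolding fps_map_def by simp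

lemma rhom_fps_map:
  assumes "rhom g"
  shows "rhom (fps_map g)"
  unfolding rhom_def
proof (intro conjI allI)
  show "fps_map g 1 = 1" by (rule fps_ext) (simp add: rhom_0[OF assms] rhomD(1)[OF assms])
  fix x y
  show "fps_map g (x + y) = fps_map g x + fps_map g y" by (rule fps_ext) (simp add: rhomD(2)[OF assms])
  show "fps_map g (x * y) = fps_map g x * fps_map g y"
    by (rule fps_ext) (simp add: fps_mult_nth rhom_sum[OF assms] rhomD(3)[OF assms])
qed

lemma fps_map_const [simp]: "rhom g \<Longrightarrow> fps_map g (fps_const r) = fps_const (g r)"
  by (rule fps_ext) (simp add: rhom_0)

lemma fps_map_X [simp]: "rhom g \<Longrightarrow> fps_map g fps_X = fps_X"
  by (rule fps_ext) (simp add: rhom_0 rhomD(1) fps_X_nth)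

lemma fps_map_surj: "surj g \<Longrightarrow> surj (fps_map g)"
  by (rule surjI[of _ "fps_map (inv g)"], rule fps_ext) (simp add: surj_f_inv_f)

definition fps2_map :: "('a \<Rightarrow> 'b) \<Rightarrow> 'a fps fps \<Rightarrow> 'b fps fps" where
  "fps2_map g = fps_map (fps_map g)"

lemma rhom_fps2_map: "rhom g \<Longrightarrow> rhom (fps2_map g)"
  unfolding fps2_map_def by (intro rhom_fps_map)

lemma fps2_map_nth [simp]: "fps2_map g F $ j $ i = g (F $ j $ i)"
  unfolding fps2_map_def by simp

lemma fps2_map_C2 [simp]: "rhom g \<Longrightarrow> fps2_map g (C2 r) = C2 (g r)"
  unfolding fps2_map_def C2_def by (simp add: rhom_fps_map)

lemma fps2_map_X2 [simp]: "rhom g \<Longrightarrow> fps2_map g X2 = X2"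
  unfolding fps2_map_def X2_def by (simp add: rhom_fps_map)

lemma fps2_map_Y2 [simp]: "rhom g \<Longrightarrow> fps2_map g Y2 = Y2"
  unfolding fps2_map_def Y2_def by (simp add: rhom_fps_map)

lemma fps2_map_surj: "surj g \<Longrightarrow> surj (fps2_map g)"
  unfolding fps2_map_def by (intro fps_map_surj)

lemma fps2_map_eq_0_principal_kernel:
  assumes "kernel g = ideal_gen {\<tau>}" "fps2_map g F = 0"
  obtains H where "F = C2 \<tau> * H"
proof -
  have "\<exists>c. F $ j $ i = c * \<tau>" for j i
  proof -
    have "g (F $ j $ i) = 0" using fps2_map_nth[of g F j i] assms(2) by simp
    then show ?thesis using assms(1) unfolding ideal_gen_singleton kernel_def by blast
  qed
  then obtain c where c: "\<And>j i. F $ j $ i = c j i * \<tau>" by metis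
  have "F = C2 \<tau> * Abs_fps (\<lambda>j. Abs_fps (\<lambda>i. c j i))"
    by (rule fps_ext, rule fps_ext) (simp add: c mult.commute)
  then show ?thesis by (rule that)
qed

lemma fps2_map_residue_annihilated:
  assumes "residue_map res" "\<forall>m\<in>nonunits. \<tau> * m = 0" "fps2_map res F = 0"
  shows "C2 \<tau> * F = 0"
proof (rule fps_ext, rule fps_ext)
  fix j i
  have "res (F $ j $ i) = 0" using fps2_map_nth[of res F j i] assms(3) by simp
  then have "F $ j $ i \<in> nonunits" using assms(1) unfolding residue_map_def kernel_def by blast
  then show "(C2 \<tau> * F) $ j $ i = 0 $ j $ i" using assms(2) by simp
qed

section \<open>The quadratic form\<close>

definition qform_dx :: "'a::comm_ring_1 \<Rightarrow> 'a \<Rightarrow> 'a \<Rightarrow> 'a \<Rightarrow> 'a" where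
  "qform_dx g d x y = 2 * x + g * y"

definition qform_dy :: "'a::comm_ring_1 \<Rightarrow> 'a \<Rightarrow> 'a \<Rightarrow> 'a \<Rightarrow> 'a" where
  "qform_dy g d x y = g * x + 2 * d * y"

lemma rhom_qform:
  assumes "rhom f"
  shows "f (qform g d x y) = qform (f g) (f d) (f x) (f y)"
    "f (qform_dx g d x y) = qform_dx (f g) (f d) (f x) (f y)"
    "f (qform_dy g d x y) = qform_dy (f g) (f d) (f x) (f y)"
  unfolding qform_def qform_dx_def qform_dy_def
  by (simp_all add: rhomD[OF assms] rhom_power[OF assms] rhom_numeral[OF assms])

lemma qform_square_zero_perturb:
  fixes T :: "'a::comm_ring_1"
  assumes "T * T = 0" "T * s = 0" "T * t = 0"
  shows "qform g d (x + T * a) (y + T * b) - qform g d (s + T * a') (t + T * b') =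
    (qform g d x y - qform g d s t) + T * (a * qform_dx g d x y + b * qform_dy g d x y)"
proof -
  have "qform g d (x + T * a) (y + T * b) - qform g d (s + T * a') (t + T * b') =
    (qform g d x y - qform g d s t) + T * (a * qform_dx g d x y + b * qform_dy g d x y)
    + (T * T) * (a * a + g * a * b + d * b * b - a' * a' - g * a' * b' - d * b' * b')
    - (T * s) * (2 * a' + g * b') - (T * t) * (g * a' + 2 * d * b')"
    unfolding qform_def qform_dx_def qform_dy_def power2_eq_square by (simp add: algebra_simps)
  then show ?thesis using assms by simp
qed

lemma fps2_decompose_XY:
  fixes F :: "'a::comm_ring_1 fps fps"
  assumes "F $ 0 $ 0 = 0"
  shows "F = X2 * fps_const (fps_shift 1 (F $ 0)) + Y2 * fps_shift 1 F"
proof (rule fps_ext, rule fps_ext)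
  fix j i
  show "F $ j $ i = (X2 * fps_const (fps_shift 1 (F $ 0)) + Y2 * fps_shift 1 F) $ j $ i"
    using assms by (cases j; cases i) (simp_all add: X2_def Y2_def fps_X_mult_nth)
qed

text \<open>Since \<open>\<gamma>\<^sup>2 - 4\<delta>\<close> is a unit, the maximal ideal \<open>(u, v)\<close> of \<open>R\<^sub>0\<close> is generated by the partial
  derivatives \<open>2u + \<gamma>v\<close> and \<open>\<gamma>u + 2\<delta>v\<close>, the determinant of the transition matrix being \<open>4\<delta> - \<gamma>\<^sup>2\<close>.\<close>
lemma R0_maximal_ideal_jacobian:
  fixes pi0 :: "'k::field fps fps \<Rightarrow> 'z::comm_ring_1"
  assumes R0: "R0_data g d pi0 D0" and w: "D0 w = 0"
  obtains c1 c2 where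
    "w + c1 * qform_dx (pi0 (C2 g)) (pi0 (C2 d)) (pi0 X2) (pi0 Y2)
       + c2 * qform_dy (pi0 (C2 g)) (pi0 (C2 d)) (pi0 X2) (pi0 Y2) = 0"
proof -
  have disc: "g^2 - 4 * d \<noteq> 0" and pi0: "rhom pi0" "surj pi0"
    and D0: "D0 \<circ> pi0 = (\<lambda>f. f $ 0 $ 0)"
    using R0 unfolding R0_data_def by auto
  obtain F where F: "w = pi0 F" using pi0(2) by (metis surjD)
  have F00: "F $ 0 $ 0 = 0" using fun_cong[OF D0, of F] w F by simp
  define P where "P = pi0 (fps_const (fps_shift 1 (F $ 0)))"
  define Q where "Q = pi0 (fps_shift 1 F)"
  define u where "u = pi0 X2"
  define v where "v = pi0 Y2"
  define \<kappa> where "\<kappa> = pi0 \<circ> C2"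
  have \<kappa>: "rhom \<kappa>" unfolding \<kappa>_def using rhom_comp[OF pi0(1) rhom_C2] .
  have wPQ: "w = P * u + Q * v"
    unfolding F P_def Q_def u_def v_def
    by (subst fps2_decompose_XY[OF F00]) (simp add: rhomD[OF pi0(1)] mult.commute)
  define \<Delta> where "\<Delta> = 4 * d - g^2"
  define e where "e = \<kappa> (1 / \<Delta>)"
  have "e * (4 * \<kappa> d - (\<kappa> g)^2) = e * \<kappa> \<Delta>"
    unfolding \<Delta>_def by (simp add: rhom_diff[OF \<kappa>] rhomD[OF \<kappa>] rhom_power[OF \<kappa>] rhom_numeral[OF \<kappa>])
  also have "\<dots> = \<kappa> (1 / \<Delta> * \<Delta>)" unfolding e_def by (rule rhomD(3)[OF \<kappa>, symmetric])
  also have "\<dots> = 1" using disc by (simp add: \<Delta>_def rhomD(1)[OF \<kappa>])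
  finally have e: "e * (4 * \<kappa> d - (\<kappa> g)^2) = 1" .
  have "w + (- (e * (P * (2 * \<kappa> d) - Q * \<kappa> g))) * qform_dx (\<kappa> g) (\<kappa> d) u v
      + (- (e * (Q * 2 - P * \<kappa> g))) * qform_dy (\<kappa> g) (\<kappa> d) u v
      = (P * u + Q * v) * (1 - e * (4 * \<kappa> d - (\<kappa> g)^2))"
    unfolding wPQ qform_dx_def qform_dy_def power2_eq_square by (simp add: algebra_simps)
  also have "\<dots> = 0" using e by simp
  finally show ?thesis unfolding u_def v_def \<kappa>_def comp_apply by (rule that)
qed

lemma surj_if_surj_mod_square_zero:
  assumes "rhom f" "T = f t" "T * T = 0" "\<And>z. \<exists>p r. z = f p + r * T"
  shows "surj f"
proof (rule surjI[of _ "\<lambda>z. SOME p. f p = z"], rule someI_ex)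
  fix z
  obtain p r where z: "z = f p + r * T" using assms(4) by blast
  obtain p' r' where r: "r = f p' + r' * T" using assms(4) by blast
  have "z = f p + f p' * T + r' * (T * T)" unfolding z r by (simp add: algebra_simps)
  also have "\<dots> = f (p + p' * t)" using assms(1-3) by (simp add: rhomD)
  finally show "\<exists>p. f p = z" by metis
qed

section \<open>Lifting planar objects along a small extension\<close>

definition planar_presentation :: "('k::field fps fps \<Rightarrow> 'z::comm_ring_1) \<Rightarrow> ('l::comm_ring_1 \<Rightarrow> 'a::comm_ring_1)
    \<Rightarrow> 'l \<Rightarrow> 'l \<Rightarrow> ('a \<Rightarrow> 'r::comm_ring_1) \<Rightarrow> ('r \<Rightarrow> 'a) \<Rightarrow> ('r \<Rightarrow> 'z) \<Rightarrow> 'a \<Rightarrow> 'a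
    \<Rightarrow> ('a fps fps \<Rightarrow> 'r) \<Rightarrow> bool" where
  "planar_presentation pi0 lam gt dt \<iota> D h s t \<phi> \<longleftrightarrow> s \<in> nonunits \<and> t \<in> nonunits \<and>
     rhom \<phi> \<and> surj \<phi> \<and>
     kernel \<phi> = ideal_gen {qform (C2 (lam gt)) (C2 (lam dt)) X2 Y2 - C2 (qform (lam gt) (lam dt) s t)} \<and>
     \<phi> \<circ> C2 = \<iota> \<and> D (\<phi> X2) = s \<and> D (\<phi> Y2) = t \<and> h (\<phi> X2) = pi0 X2 \<and> h (\<phi> Y2) = pi0 Y2"

lemma planar_iff_presentation:
  "planar pi0 lam gt dt \<iota> D h \<longleftrightarrow> (\<exists>s t \<phi>. planar_presentation pi0 lam gt dt \<iota> D h s t \<phi>)"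
  unfolding planar_def planar_presentation_def ..

locale small_extension_planar =
  fixes pi0 :: "'k::field fps fps \<Rightarrow> 'z::comm_ring_1" and D0 :: "'z \<Rightarrow> 'k" and g d :: 'k
    and lamA :: "'l::comm_ring_1 \<Rightarrow> 'a::comm_ring_1" and lamB :: "'l \<Rightarrow> 'b::comm_ring_1" and gt dt :: 'l
    and resA :: "'a \<Rightarrow> 'k" and resB :: "'b \<Rightarrow> 'k" and gA :: "'b \<Rightarrow> 'a" and \<tau> :: 'b
    and iS :: "'b \<Rightarrow> 's::comm_ring_1" and DS :: "'s \<Rightarrow> 'b" and hS :: "'s \<Rightarrow> 'z"
    and iR :: "'a \<Rightarrow> 'r::comm_ring_1" and DR :: "'r \<Rightarrow> 'a" and hR :: "'r \<Rightarrow> 'z"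
    and gR :: "'s \<Rightarrow> 'r" and sA tA :: 'a and \<phi>A :: "'a fps fps \<Rightarrow> 'r"
  assumes R0: "R0_data g d pi0 D0"
    and resB: "residue_map resB" and lifts: "resB (lamB gt) = g" "resB (lamB dt) = d"
    and gA: "rhom gA" "gA \<circ> lamB = lamA" "surj gA"
    and small: "kernel gA = ideal_gen {\<tau>}" "\<forall>m\<in>nonunits. \<tau> * m = 0"
    and FS: "F_obj pi0 D0 resB iS DS hS"
    and FR: "F_obj pi0 D0 resA iR DR hR"
    and gR: "rhom gR" "gR \<circ> iS = iR \<circ> gA" "DR \<circ> gR = gA \<circ> DS" "hR \<circ> gR = hS"
    and base_change: "surj gR" "kernel gR = ideal_gen (iS ` kernel gA)"
    and presA: "planar_presentation pi0 lamA gt dt iR DR hR sA tA \<phi>A"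
begin

abbreviation "\<tau>S \<equiv> iS \<tau>"
abbreviation "\<gamma>B \<equiv> lamB gt"
abbreviation "\<delta>B \<equiv> lamB dt"
abbreviation "relA \<equiv> qform (C2 (lamA gt)) (C2 (lamA dt)) X2 Y2 - C2 (qform (lamA gt) (lamA dt) sA tA)"

lemma S_structure:
  shows rhom_iS: "rhom iS" and flat_iS: "flat_alg iS" and local_iS: "local_hom iS"
    and complete_S: "adic_complete (nonunits :: 's set)" and local_ring_S: "local_ring TYPE('s)"
    and rhom_DS: "rhom DS" and local_DS: "local_hom DS" and DS_iS: "DS (iS b) = b"
    and rhom_hS: "rhom hS" and hS_iS: "hS (iS b) = pi0 (C2 (resB b))" and surj_hS: "surj hS"
    and kernel_hS: "kernel hS = ideal_gen (iS ` (nonunits :: 'b set))"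
    and resB_DS: "resB (DS x) = D0 (hS x)"
  using FS unfolding F_obj_def by (auto simp: fun_eq_iff)

lemma R_structure:
  shows rhom_iR: "rhom iR" and local_ring_R: "local_ring TYPE('r)"
    and complete_R: "adic_complete (nonunits :: 'r set)" and rhom_DR: "rhom DR"
  using FR unfolding F_obj_def by auto

lemma gR_apply: "gR (iS b) = iR (gA b)" "DR (gR x) = gA (DS x)" "hR (gR x) = hS x"
  using gR(2-4) by (metis comp_apply)+

lemma presA_structure:
  shows sA: "sA \<in> nonunits" and tA: "tA \<in> nonunits" and rhom_\<phi>A: "rhom \<phi>A" and surj_\<phi>A: "surj \<phi>A"
    and kernel_\<phi>A: "kernel \<phi>A = ideal_gen {relA}"
    and \<phi>A_C2: "\<phi>A (C2 a) = iR a" and DR_\<phi>A: "DR (\<phi>A X2) = sA" "DR (\<phi>A Y2) = tA"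
    and hR_\<phi>A: "hR (\<phi>A X2) = pi0 X2" "hR (\<phi>A Y2) = pi0 Y2"
  using presA unfolding planar_presentation_def by (auto simp: fun_eq_iff)

lemma \<phi>A_XY_nonunits: "\<phi>A X2 \<in> nonunits" "\<phi>A Y2 \<in> nonunits"
  using rhom_nonunits_preimage[OF rhom_DR] DR_\<phi>A sA tA by auto

lemma nonunits_B_eq: "(nonunits :: 'b set) = kernel resB"
  using resB unfolding residue_map_def by simp

lemma tau_nonunit: "\<tau> \<in> nonunits"
proof (rule rhom_nonunits_preimage[OF gA(1)])
  have "(1::'r) \<noteq> 0" using local_ring_R unfolding local_ring_def by simp
  then have "(1::'a) \<noteq> 0" using rhomD(1)[OF rhom_iR] rhom_0[OF rhom_iR] by metis
  moreover have "gA \<tau> = 0"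
    using small(1) ideal_gen_superset[of "{\<tau>}"] unfolding kernel_def by blast
  ultimately show "gA \<tau> \<in> nonunits" by (simp add: nonunits_def)
qed

lemma tauS_square: "\<tau>S * \<tau>S = 0"
  using small(2) tau_nonunit by (metis rhomD(3)[OF rhom_iS] rhom_0[OF rhom_iS])

lemma gR_eq_0_iff: "gR z = 0 \<longleftrightarrow> (\<exists>r. z = r * \<tau>S)"
proof -
  have "ideal_gen (iS ` kernel gA) = ideal_gen {\<tau>S}"
  proof (rule antisym)
    have "iS ` kernel gA \<subseteq> {r * \<tau>S | r. True}"
      unfolding small(1) ideal_gen_singleton using rhomD(3)[OF rhom_iS] by blast
    then show "ideal_gen (iS ` kernel gA) \<subseteq> ideal_gen {\<tau>S}"
      by (intro ideal_gen_minimal[OF is_ideal_ideal_gen]) (simp add: ideal_gen_singleton)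
    have "\<tau> \<in> kernel gA" using small(1) ideal_gen_superset by blast
    then show "ideal_gen {\<tau>S} \<subseteq> ideal_gen (iS ` kernel gA)" by (intro ideal_gen_mono) blast
  qed
  then show ?thesis using base_change(2) unfolding kernel_def ideal_gen_singleton by blast
qed

lemma tauS_mult_maximal: "z \<in> ideal_gen (iS ` nonunits) \<Longrightarrow> \<tau>S * z = 0"
  by (rule annihilates_ideal_gen_image[OF rhom_iS small(2)])

lemma annihilator_tauS:
  assumes "\<tau> \<noteq> 0" "\<tau>S * z = 0"
  shows "z \<in> ideal_gen (iS ` nonunits)"
proof -
  have "{c. \<tau> * c = 0} \<subseteq> nonunits" using nonunits_of_annihilates[OF assms(1)] by blast
  then show ?thesis
    using flat_alg_annihilator[OF flat_iS rhom_iS assms(2)] ideal_gen_mono[OF image_mono] by blast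
qed

lemma gA_lamB: "gA (lamB l) = lamA l"
  using gA(2) by (metis comp_apply)

lemma tauS_mult_iS_nonunit: "b \<in> nonunits \<Longrightarrow> \<tau>S * iS b = 0"
  using small(2) by (metis rhomD(3)[OF rhom_iS] rhom_0[OF rhom_iS])

lemma gR_tauS: "gR \<tau>S = 0"
  using gR_eq_0_iff[of \<tau>S] by (metis mult_1)

lemma lift_generators:
  obtains x0 y0 where "x0 \<in> nonunits" "y0 \<in> nonunits" "gR x0 = \<phi>A X2" "gR y0 = \<phi>A Y2"
proof -
  obtain x0 y0 where "gR x0 = \<phi>A X2" "gR y0 = \<phi>A Y2" using base_change(1) by (metis surjD)
  then show ?thesis using that rhom_nonunits_preimage[OF gR(1)] \<phi>A_XY_nonunits by metis
qed

lemma relation_defect: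
  assumes x0: "gR x0 = \<phi>A X2" and y0: "gR y0 = \<phi>A Y2"
  obtains w where "qform (iS \<gamma>B) (iS \<delta>B) x0 y0 - iS (qform \<gamma>B \<delta>B (DS x0) (DS y0)) = w * \<tau>S"
    and "DS w * \<tau> = 0"
proof -
  let ?e = "qform (iS \<gamma>B) (iS \<delta>B) x0 y0 - iS (qform \<gamma>B \<delta>B (DS x0) (DS y0))"
  have "\<phi>A relA = 0"
    using kernel_\<phi>A ideal_gen_superset unfolding kernel_def by blast
  moreover have "gA (DS x0) = sA" "gA (DS y0) = tA" using gR_apply(2) x0 y0 DR_\<phi>A by metis+
  ultimately have "gR ?e = 0"
    by (simp add: rhom_diff[OF gR(1)] rhom_qform[OF gR(1)] rhom_diff[OF rhom_\<phi>A] rhom_qform[OF rhom_\<phi>A]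
        rhom_qform[OF gA(1)] gR_apply(1) \<phi>A_C2 gA_lamB x0 y0)
  then obtain w where w: "?e = w * \<tau>S" using gR_eq_0_iff by blast
  have "DS ?e = 0"
    by (simp add: rhom_diff[OF rhom_DS] rhom_qform[OF rhom_DS] DS_iS)
  then have "DS w * \<tau> = 0" unfolding w rhomD(3)[OF rhom_DS] DS_iS .
  with w show ?thesis by (rule that)
qed

text \<open>The defect \<open>w\<close> vanishes in the residue field, hence its image in \<open>R\<^sub>0\<close> lies in the ideal
  of the partial derivatives; lifting the coefficients to \<open>S\<close> leaves an error in \<open>\<mm>\<^sub>B S\<close>,
  which \<open>\<tau>\<close> kills.\<close>
lemma cancel_defect:
  assumes x0: "gR x0 = \<phi>A X2" and y0: "gR y0 = \<phi>A Y2" and w: "DS w * \<tau> = 0"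
  obtains a b where "\<tau>S * (w + a * qform_dx (iS \<gamma>B) (iS \<delta>B) x0 y0 + b * qform_dy (iS \<gamma>B) (iS \<delta>B) x0 y0) = 0"
proof (cases "\<tau> = 0")
  case True
  then show ?thesis using that[of 0 0] by (simp add: rhom_0[OF rhom_iS])
next
  case False
  have "DS w \<in> nonunits" using nonunits_of_annihilates[OF False] w by (simp add: mult.commute)
  then have "resB (DS w) = 0" unfolding nonunits_B_eq kernel_def by simp
  then have "D0 (hS w) = 0" by (simp add: resB_DS)
  then obtain c1 c2 where c: "hS w + c1 * qform_dx (pi0 (C2 g)) (pi0 (C2 d)) (pi0 X2) (pi0 Y2)
      + c2 * qform_dy (pi0 (C2 g)) (pi0 (C2 d)) (pi0 X2) (pi0 Y2) = 0"
    by (rule R0_maximal_ideal_jacobian[OF R0])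
  obtain a b where ab: "hS a = c1" "hS b = c2" using surj_hS by (metis surjD)
  have "hS x0 = pi0 X2" "hS y0 = pi0 Y2" using gR_apply(3) hR_\<phi>A x0 y0 by metis+
  then have "hS (w + a * qform_dx (iS \<gamma>B) (iS \<delta>B) x0 y0 + b * qform_dy (iS \<gamma>B) (iS \<delta>B) x0 y0) = 0"
    using c by (simp add: rhomD[OF rhom_hS] rhom_qform[OF rhom_hS] hS_iS lifts ab)
  then show ?thesis
    using that tauS_mult_maximal kernel_hS unfolding kernel_def by blast
qed

lemma lift_planar_relation:
  obtains x y where "x \<in> nonunits" "y \<in> nonunits" "gR x = \<phi>A X2" "gR y = \<phi>A Y2"
    "qform (iS \<gamma>B) (iS \<delta>B) x y = iS (qform \<gamma>B \<delta>B (DS x) (DS y))"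
proof -
  obtain x0 y0 where nu: "x0 \<in> nonunits" "y0 \<in> nonunits" and x0: "gR x0 = \<phi>A X2" and y0: "gR y0 = \<phi>A Y2"
    by (rule lift_generators)
  obtain w where e: "qform (iS \<gamma>B) (iS \<delta>B) x0 y0 - iS (qform \<gamma>B \<delta>B (DS x0) (DS y0)) = w * \<tau>S"
    and w: "DS w * \<tau> = 0"
    using relation_defect[OF x0 y0] by blast
  obtain a b where ab: "\<tau>S * (w + a * qform_dx (iS \<gamma>B) (iS \<delta>B) x0 y0 + b * qform_dy (iS \<gamma>B) (iS \<delta>B) x0 y0) = 0"
    using cancel_defect[OF x0 y0 w] by blast
  define x where "x = x0 + \<tau>S * a"
  define y where "y = y0 + \<tau>S * b"
  have DS_nu: "DS x0 \<in> nonunits" "DS y0 \<in> nonunits" using local_hom_nonunits[OF local_DS] nu by auto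
  have iS_DS: "iS (DS x) = iS (DS x0) + \<tau>S * iS (DS a)" "iS (DS y) = iS (DS y0) + \<tau>S * iS (DS b)"
    unfolding x_def y_def by (simp_all add: rhomD[OF rhom_DS] rhomD[OF rhom_iS] DS_iS)
  have "qform (iS \<gamma>B) (iS \<delta>B) x y - iS (qform \<gamma>B \<delta>B (DS x) (DS y))
      = (qform (iS \<gamma>B) (iS \<delta>B) x0 y0 - iS (qform \<gamma>B \<delta>B (DS x0) (DS y0)))
        + \<tau>S * (a * qform_dx (iS \<gamma>B) (iS \<delta>B) x0 y0 + b * qform_dy (iS \<gamma>B) (iS \<delta>B) x0 y0)"
    unfolding rhom_qform[OF rhom_iS] iS_DS unfolding x_def y_def
    by (rule qform_square_zero_perturb[OF tauS_square tauS_mult_iS_nonunit[OF DS_nu(1)]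
          tauS_mult_iS_nonunit[OF DS_nu(2)]])
  also have "\<dots> = 0" using ab unfolding e by (simp add: algebra_simps)
  finally have "qform (iS \<gamma>B) (iS \<delta>B) x y = iS (qform \<gamma>B \<delta>B (DS x) (DS y))" by simp
  moreover have "x \<in> nonunits" "y \<in> nonunits"
    using local_ring_S nu tau_nonunit local_hom_nonunits[OF local_iS tau_nonunit]
    unfolding x_def y_def local_ring_def by (auto intro: is_idealD ideal_mult_right)
  moreover have "gR x = \<phi>A X2" "gR y = \<phi>A Y2"
    using gR_tauS x0 y0 unfolding x_def y_def by (simp_all add: rhomD[OF gR(1)])
  ultimately show ?thesis using that by blast
qed

context
  fixes \<phi>B :: "'b fps fps \<Rightarrow> 's" and x y :: 's
  assumes rhom_\<phi>B: "rhom \<phi>B" and \<phi>B_C2: "\<And>r. \<phi>B (C2 r) = iS r"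
    and \<phi>B_X2: "\<phi>B X2 = x" and \<phi>B_Y2: "\<phi>B Y2 = y"
    and x: "x \<in> nonunits" and y: "y \<in> nonunits" and gR_x: "gR x = \<phi>A X2" and gR_y: "gR y = \<phi>A Y2"
    and rel: "qform (iS \<gamma>B) (iS \<delta>B) x y = iS (qform \<gamma>B \<delta>B (DS x) (DS y))"
begin

abbreviation "relB \<equiv> qform (C2 \<gamma>B) (C2 \<delta>B) X2 Y2 - C2 (qform \<gamma>B \<delta>B (DS x) (DS y))"

lemma gR_\<phi>B: "gR (\<phi>B F) = \<phi>A (fps2_map gA F)"
proof -
  have "gR \<circ> \<phi>B = \<phi>A \<circ> fps2_map gA"
    by (rule fps2_hom_unique[OF rhom_comp[OF gR(1) rhom_\<phi>B]
          rhom_comp[OF rhom_\<phi>A rhom_fps2_map[OF gA(1)]], of nonunits])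
      (simp_all add: \<phi>B_C2 gR_apply \<phi>A_C2 \<phi>B_X2 \<phi>B_Y2 gR_x gR_y gA(1) \<phi>A_XY_nonunits complete_R)
  then show ?thesis by (metis comp_apply)
qed

lemma surj_\<phi>B: "surj \<phi>B"
proof (rule surj_if_surj_mod_square_zero[OF rhom_\<phi>B \<phi>B_C2[symmetric] tauS_square])
  fix z
  obtain p where "gR z = \<phi>A p" using surj_\<phi>A by (metis surjD)
  moreover obtain p' where "p = fps2_map gA p'" using fps2_map_surj[OF gA(3)] by (metis surjD)
  ultimately have "gR (z - \<phi>B p') = 0" by (simp add: rhom_diff[OF gR(1)] gR_\<phi>B)
  then obtain r where "z - \<phi>B p' = r * \<tau>S" using gR_eq_0_iff by blast
  then have "z = \<phi>B p' + r * \<tau>S" by (simp add: algebra_simps)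
  then show "\<exists>p r. z = \<phi>B p + r * \<tau>S" by blast
qed

lemma \<phi>B_relB: "\<phi>B relB = 0"
  by (simp add: rhom_diff[OF rhom_\<phi>B] rhom_qform[OF rhom_\<phi>B] \<phi>B_C2 \<phi>B_X2 \<phi>B_Y2 rel)

lemma fps2_map_gA_relB: "fps2_map gA relB = relA"
proof -
  have "gA (DS x) = sA" "gA (DS y) = tA" using gR_apply(2) gR_x gR_y DR_\<phi>A by metis+
  then show ?thesis
    by (simp add: rhom_diff[OF rhom_fps2_map[OF gA(1)]] rhom_qform[OF rhom_fps2_map[OF gA(1)]]
        rhom_qform[OF gA(1)] gA(1) gA_lamB)
qed

lemma kernel_\<phi>B_mod_tau:
  assumes "\<phi>B k = 0"
  obtains c h where "k = c * relB + C2 \<tau> * h"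
proof -
  have "\<phi>A (fps2_map gA k) = 0" using gR_\<phi>B[of k] assms rhom_0[OF gR(1)] by simp
  then obtain r where r: "fps2_map gA k = r * relA"
    using kernel_\<phi>A unfolding kernel_def ideal_gen_singleton by blast
  obtain c where c: "r = fps2_map gA c" using fps2_map_surj[OF gA(3)] by (metis surjD)
  have "fps2_map gA (k - c * relB) = 0"
    using rhom_fps2_map[OF gA(1)] by (simp add: rhom_diff rhomD(3) fps2_map_gA_relB r c)
  then obtain h where "k - c * relB = C2 \<tau> * h" by (rule fps2_map_eq_0_principal_kernel[OF small(1)])
  then show ?thesis using that[of c h] by (simp add: algebra_simps)
qed

lemma maximal_ideal_S_image: "ideal_gen (iS ` nonunits) \<subseteq> \<phi>B ` kernel (fps2_map resB)"
proof (rule ideal_gen_minimal)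
  have "rhom resB" using resB unfolding residue_map_def by simp
  then show "is_ideal (\<phi>B ` kernel (fps2_map resB))"
    by (intro is_ideal_image rhom_\<phi>B surj_\<phi>B is_ideal_kernel rhom_fps2_map)
  have "C2 r \<in> kernel (fps2_map resB)" if "r \<in> nonunits" for r
  proof -
    have "resB r = 0" using that unfolding nonunits_B_eq kernel_def by simp
    then show ?thesis using \<open>rhom resB\<close> unfolding kernel_def by simp
  qed
  then show "iS ` nonunits \<subseteq> \<phi>B ` kernel (fps2_map resB)"
    using \<phi>B_C2 by (metis image_mono image_subsetI rev_image_eqI)
qed

text \<open>Modulo \<open>\<tau>\<close> the kernel is generated by the relation because it is over \<open>A\<close>; the remaining
  error \<open>\<tau> h\<close> has \<open>\<phi>\<^sub>B h\<close> in the annihilator \<open>\<mm>\<^sub>B S\<close> of \<open>\<tau>\<close>, so \<open>h\<close> can be changed by an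
  element of \<open>\<mm>\<^sub>B[[X,Y]]\<close>, which \<open>\<tau>\<close> kills, into another element of the kernel.\<close>
lemma kernel_\<phi>B: "kernel \<phi>B = ideal_gen {relB}"
proof
  show "ideal_gen {relB} \<subseteq> kernel \<phi>B"
    by (rule ideal_gen_minimal[OF is_ideal_kernel[OF rhom_\<phi>B]]) (simp add: kernel_def \<phi>B_relB)
  show "kernel \<phi>B \<subseteq> ideal_gen {relB}"
  proof
    fix k assume "k \<in> kernel \<phi>B"
    then have k0: "\<phi>B k = 0" unfolding kernel_def by simp
    then obtain c h where k: "k = c * relB + C2 \<tau> * h" by (rule kernel_\<phi>B_mod_tau)
    have "\<tau>S * \<phi>B h = 0"
      using k0 \<phi>B_relB unfolding k by (simp add: rhomD[OF rhom_\<phi>B] \<phi>B_C2)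
    show "k \<in> ideal_gen {relB}"
    proof (cases "\<tau> = 0")
      case True
      then show ?thesis using k unfolding ideal_gen_singleton by auto
    next
      case False
      then obtain m where m: "m \<in> kernel (fps2_map resB)" "\<phi>B h = \<phi>B m"
        using annihilator_tauS \<open>\<tau>S * \<phi>B h = 0\<close> maximal_ideal_S_image by blast
      have "\<phi>B (h - m) = 0" using m(2) by (simp add: rhom_diff[OF rhom_\<phi>B])
      then obtain c' h' where "h - m = c' * relB + C2 \<tau> * h'" by (rule kernel_\<phi>B_mod_tau)
      then have h: "h = m + c' * relB + C2 \<tau> * h'" by (simp add: algebra_simps)
      have "k = (c + C2 \<tau> * c') * relB + C2 \<tau> * m + (C2 \<tau> * C2 \<tau>) * h'"
        unfolding k h by (simp add: algebra_simps)
      moreover have "C2 \<tau> * C2 \<tau> = 0"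
        using tauS_square small(2) tau_nonunit by (simp add: rhomD(3)[OF rhom_C2, symmetric])
      moreover have "C2 \<tau> * m = 0"
        using fps2_map_residue_annihilated[OF resB small(2)] m(1) unfolding kernel_def by simp
      ultimately show ?thesis unfolding ideal_gen_singleton by auto
    qed
  qed
qed

lemma planar_presentation_\<phi>B: "planar_presentation pi0 lamB gt dt iS DS hS (DS x) (DS y) \<phi>B"
proof -
  have "hS x = pi0 X2" "hS y = pi0 Y2" using gR_apply(3) gR_x gR_y hR_\<phi>A by metis+
  then show ?thesis
    unfolding planar_presentation_def
    using local_hom_nonunits[OF local_DS] x y rhom_\<phi>B surj_\<phi>B kernel_\<phi>B \<phi>B_C2 \<phi>B_X2 \<phi>B_Y2
    by (auto simp: fun_eq_iff)
qed

end

theorem planar_S: "planar pi0 lamB gt dt iS DS hS"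
proof -
  obtain x y where xy: "x \<in> nonunits" "y \<in> nonunits" "gR x = \<phi>A X2" "gR y = \<phi>A Y2"
    "qform (iS \<gamma>B) (iS \<delta>B) x y = iS (qform \<gamma>B \<delta>B (DS x) (DS y))"
    by (rule lift_planar_relation)
  obtain \<phi>B where "rhom \<phi>B" "\<And>r. \<phi>B (C2 r) = iS r" "\<phi>B X2 = x" "\<phi>B Y2 = y"
    using fps2_hom_exists[OF rhom_iS complete_S xy(1,2)] by blast
  from planar_presentation_\<phi>B[OF this xy] show ?thesis
    unfolding planar_iff_presentation by blast
qed

end

theorem mainTheorem7:
  fixes resL :: "'l::comm_ring_1 \<Rightarrow> 'k::field"
    and g d :: 'k and gt dt :: 'l
    and pi0 :: "'k fps fps \<Rightarrow> 'z::comm_ring_1" and D0 :: "'z \<Rightarrow> 'k"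
    and lamA :: "'l \<Rightarrow> 'a::comm_ring_1" and resA :: "'a \<Rightarrow> 'k"
    and lamB :: "'l \<Rightarrow> 'b::comm_ring_1" and resB :: "'b \<Rightarrow> 'k"
    and gA :: "'b \<Rightarrow> 'a" and \<tau> :: 'b
    and iS :: "'b \<Rightarrow> 's::comm_ring_1" and DS :: "'s \<Rightarrow> 'b" and hS :: "'s \<Rightarrow> 'z"
    and iR :: "'a \<Rightarrow> 'r::comm_ring_1" and DR :: "'r \<Rightarrow> 'a" and hR :: "'r \<Rightarrow> 'z"
    and gR :: "'s \<Rightarrow> 'r"
  assumes base: "base_ring resL"
    and lifts: "resL gt = g" "resL dt = d"
    and R0: "R0_data g d pi0 D0"
    and CA: "C_obj resL lamA resA"
    and CB: "C_obj resL lamB resB"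
    and gA_hom: "rhom gA" "local_hom gA" "gA \<circ> lamB = lamA" "resA \<circ> gA = resB"
    and small: "surj gA" "kernel gA = ideal_gen {\<tau>}" "\<forall>m\<in>nonunits. \<tau> * m = 0"
    and FS: "F_obj pi0 D0 resB iS DS hS"
    and FR: "F_obj pi0 D0 resA iR DR hR"
    and gR_hom: "rhom gR" "local_hom gR" "gR \<circ> iS = iR \<circ> gA" "DR \<circ> gR = gA \<circ> DS" "hR \<circ> gR = hS"
    and base_change: "surj gR" "kernel gR = ideal_gen (iS ` kernel gA)"
    and planarR: "planar pi0 lamA gt dt iR DR hR"
  shows "planar pi0 lamB gt dt iS DS hS"
proof -
  obtain sA tA \<phi>A where presA: "planar_presentation pi0 lamA gt dt iR DR hR sA tA \<phi>A"
    using planarR unfolding planar_iff_presentation by blast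
  have "resB (lamB gt) = g" "resB (lamB dt) = d"
    using CB lifts unfolding C_obj_def by (metis comp_apply)+
  moreover have "residue_map resB" using CB unfolding C_obj_def by simp
  ultimately interpret small_extension_planar pi0 D0 g d lamA lamB gt dt resA resB gA \<tau>
      iS DS hS iR DR hR gR sA tA \<phi>A
    using R0 gA_hom(1,3) small FS FR gR_hom(1,3-5) base_change presA
    by unfold_locales auto
  show ?thesis by (rule planar_S)
qed

end
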